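(* Let $\Gamma\subset\mathbf{Z}^n$ be an almost periodic pattern and $P\in O_n(\mathbf{R})$. Then the set $\widehat P(\Gamma)$ is an almost periodic pattern.
   Context: Balls are for the sup norm: $B(x,R)=\{y\in\mathbf{R}^n:\max_i|x_i-y_i|<R\}$. A set $\Gamma\subset\mathbf{R}^n$ is relatively dense if there is $R_\Gamma>0$ such that every ball of radius at least $R_\Gamma$ contains a point of $\Gamma$; uniformly discrete if there is $r_\Gamma>0$ such that every ball of radius at most $r_\Gamma$ contains at most one point of $\Gamma$; Delone if both. For a discrete set $\Gamma$ and $R\ge1$, $D_R^+(\Gamma)=\sup_{x\in\mathbf{R}^n}\frac{\operatorname{Card}(B(x,R)\cap\Gamma)}{\operatorname{Card}(B(x,R)\cap\mathbf{Z}^n)}$. A Delone set $\Gamma\subset\mathbf{Z}^n$ is an almost periodic pattern if for every $\varepsilon>0$ there exist $R_\varepsilon>0$ and a relatively dense set $\mathcal N_\varepsilon$ such that for all $R\ge R_\varepsilon$ and all $v\in\mathcal N_\varepsilon$, $D_R^+\big((\Gamma+v)\Delta\Gamma\big)<\varepsilon$. Let $p:\mathbf{R}\to\mathbf{Z}$ send $x$ to the unique integer $k$ with $k-1/2<x\le k+1/2$, $\pi((x_i)_i)=(p(x_i))_i$, and for $P\in O_n(\mathbf{R})$, $\widehat P:\mathbf{Z}^n\to\mathbf{Z}^n$, $\widehat P(x)=\pi(Px)$. *)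

theory Defs
  imports "HOL-Analysis.Analysis"
begin

definition int_to_real :: "int^'n \<Rightarrow> real^'n" where
  "int_to_real z = (\<chi> i. real_of_int (z $ i))"

definition supball_Z :: "real^'n \<Rightarrow> real \<Rightarrow> (int^'n) set" where
  "supball_Z x R = {z. (MAX i\<in>UNIV. \<bar>x $ i - real_of_int (z $ i)\<bar>) < R}"

definition relatively_dense :: "(int^'n) set \<Rightarrow> bool" where
  "relatively_dense G \<longleftrightarrow>
     (\<exists>RG>0. \<forall>x R. R \<ge> RG \<longrightarrow> (\<exists>g\<in>G. g \<in> supball_Z x R))"

definition uniformly_discrete :: "(int^'n) set \<Rightarrow> bool" where
  "uniformly_discrete G \<longleftrightarrow>
     (\<exists>rG>0. \<forall>x r. r \<le> rG \<longrightarrow>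
        (\<forall>a\<in>G \<inter> supball_Z x r. \<forall>b\<in>G \<inter> supball_Z x r. a = b))"

definition delone :: "(int^'n) set \<Rightarrow> bool" where
  "delone G \<longleftrightarrow> relatively_dense G \<and> uniformly_discrete G"

definition upper_density :: "real \<Rightarrow> (int^'n) set \<Rightarrow> real" where
  "upper_density R G =
     (SUP x\<in>(UNIV :: (real^'n) set).
        real (card (supball_Z x R \<inter> G)) / real (card (supball_Z x R)))"

definition translate :: "(int^'n) set \<Rightarrow> int^'n \<Rightarrow> (int^'n) set" where
  "translate G v = (\<lambda>g. g + v) ` G"

definition almost_periodic_pattern :: "(int^'n) set \<Rightarrow> bool" where
  "almost_periodic_pattern G \<longleftrightarrow> delone G \<and>
     (\<forall>\<epsilon>>0. \<exists>R\<epsilon>>0. \<exists>N. relatively_dense N \<and>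
        (\<forall>R v. R \<ge> R\<epsilon> \<and> R \<ge> 1 \<and> v \<in> N \<longrightarrow>
           upper_density R ((translate G v - G) \<union> (G - translate G v)) < \<epsilon>))"

definition round_half :: "real \<Rightarrow> int" where
  "round_half x = (THE k::int. real_of_int k - 1/2 < x \<and> x \<le> real_of_int k + 1/2)"

definition round_vec :: "real^'n \<Rightarrow> int^'n" where
  "round_vec x = (\<chi> i. round_half (x $ i))"

definition discretization :: "real^'n^'n \<Rightarrow> int^'n \<Rightarrow> int^'n" where
  "discretization P z = round_vec (P *v int_to_real z)"

end

theory Submission
  imports Defs
begin

text \<open>Write \<open>D z = discretization P z\<close>. It lies within sup-distance \<open>1/2\<close> of the isometric
  image \<open>P z\<close>, so \<open>D\<close> preserves relative density and distorts upper densities by at most a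
  constant factor. For almost periodicity, pick almost periods \<open>u\<close>, \<open>a\<close> of \<open>\<Gamma>\<close> for which the
  fractional parts of \<open>P u\<close> and \<open>P a\<close> are \<open>\<delta>\<close>-close; the differences \<open>v = u - a\<close> are still
  relatively dense almost periods, and \<open>P v\<close> is \<open>\<delta>\<close>-close to the integer vector \<open>w = D v\<close>.
  Then \<open>D (z + v) = D z + w\<close> unless some coordinate \<open>(P z)\<^sub>i\<close> with \<open>(P v)\<^sub>i \<notin> \<int>\<close> is
  \<open>\<delta>\<close>-close to \<open>\<int> + 1/2\<close>. For a rational row this cannot happen once \<open>\<delta>\<close> is small; for a
  row with an irrational entry \<open>P\<^sub>i\<^sub>j\<close> such points \<open>z\<close> have density \<open>O(1/Q)\<close>, because for
  small \<open>\<delta>\<close> the multiples \<open>t P\<^sub>i\<^sub>j\<close>, \<open>1 \<le> t \<le> Q\<close>, stay \<open>2\<delta>\<close>-far from \<open>\<int>\<close>, so the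
  translates \<open>z + t e\<^sub>j\<close> are not such points.\<close>

section \<open>Rounding\<close>

lemma round_half_eq_ceiling: "round_half a = \<lceil>a - 1/2\<rceil>"
  unfolding round_half_def
proof (rule the_equality)
  show "real_of_int \<lceil>a - 1/2\<rceil> - 1/2 < a \<and> a \<le> real_of_int \<lceil>a - 1/2\<rceil> + 1/2"
    by linarith
next
  fix k :: int
  assume "real_of_int k - 1/2 < a \<and> a \<le> real_of_int k + 1/2"
  then show "k = \<lceil>a - 1/2\<rceil>"
    by (intro ceiling_unique[symmetric]) auto
qed

lemma round_half_add_of_int: "round_half (a + real_of_int m) = round_half a + m"
  unfolding round_half_eq_ceiling by (metis add_diff_eq ceiling_add_of_int diff_add_eq)

lemma round_half_dist_le: "\<bar>real_of_int (round_half a) - a\<bar> \<le> 1/2"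
  unfolding round_half_eq_ceiling by linarith

lemma round_half_unique: "\<bar>a - real_of_int k\<bar> < 1/2 \<Longrightarrow> round_half a = k"
  unfolding round_half_eq_ceiling by (intro ceiling_unique) linarith+

lemma round_half_stable:
  assumes far: "\<And>k::int. \<delta> \<le> \<bar>a - 1/2 - real_of_int k\<bar>" and e: "\<bar>e\<bar> < \<delta>"
  shows "round_half (a + e) = round_half a"
proof -
  define b where "b = a - 1/2"
  have "\<delta> \<le> \<bar>b - real_of_int \<lceil>b\<rceil>\<bar>" "\<delta> \<le> \<bar>b - real_of_int (\<lceil>b\<rceil> - 1)\<bar>"
    using far[of "\<lceil>b\<rceil>"] far[of "\<lceil>b\<rceil> - 1"] unfolding b_def by simp_all
  moreover have "b \<le> real_of_int \<lceil>b\<rceil>" "real_of_int \<lceil>b\<rceil> - 1 < b"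
    using ceiling_correct[of b] by auto
  ultimately have "real_of_int \<lceil>b\<rceil> - 1 < b + e \<and> b + e \<le> real_of_int \<lceil>b\<rceil>"
    using e by (simp add: abs_less_iff abs_le_iff)
  then have "\<lceil>b + e\<rceil> = \<lceil>b\<rceil>"
    by (intro ceiling_unique) auto
  then show ?thesis
    unfolding round_half_eq_ceiling b_def by (simp add: algebra_simps)
qed

lemma int_to_real_nth [simp]: "int_to_real z $ i = real_of_int (z $ i)"
  by (simp add: int_to_real_def)

lemma int_to_real_add: "int_to_real (a + b) = int_to_real a + int_to_real b"
  by (simp add: vec_eq_iff)

lemma int_to_real_diff: "int_to_real (a - b) = int_to_real a - int_to_real b"
  by (simp add: vec_eq_iff)

lemma discretization_nth: "discretization P z $ i = round_half ((P *v int_to_real z) $ i)"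
  by (simp add: discretization_def round_vec_def)

lemma discretization_dist_le:
  "\<bar>real_of_int (discretization P z $ i) - (P *v int_to_real z) $ i\<bar> \<le> 1/2"
  unfolding discretization_nth by (rule round_half_dist_le)

section \<open>Integer points in sup-balls\<close>

lemma mem_supball_Z_iff:
  "z \<in> supball_Z x R \<longleftrightarrow> (\<forall>i. \<bar>x $ i - real_of_int (z $ i)\<bar> < R)"
  unfolding supball_Z_def by (simp add: Max_less_iff)

definition int_nbhd :: "real \<Rightarrow> real \<Rightarrow> int set" where
  "int_nbhd a R = {k. \<bar>a - real_of_int k\<bar> < R}"

lemma int_nbhd_eq: "int_nbhd a R = {\<lfloor>a - R\<rfloor> + 1 .. \<lceil>a + R\<rceil> - 1}"
  unfolding int_nbhd_def by (auto simp: abs_less_iff; linarith)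

lemma card_int_nbhd_bounds:
  assumes "R \<ge> 1"
  shows "2*R - 1 \<le> real (card (int_nbhd a R))" "real (card (int_nbhd a R)) \<le> 2*R + 1"
proof -
  have "a + R \<le> real_of_int \<lceil>a + R\<rceil>" "real_of_int \<lfloor>a - R\<rfloor> \<le> a - R"
    by (rule le_of_int_ceiling, rule of_int_floor_le)
  then have "0 \<le> \<lceil>a + R\<rceil> - \<lfloor>a - R\<rfloor> - 1"
    using assms by linarith
  then have card: "real (card (int_nbhd a R)) = real_of_int (\<lceil>a + R\<rceil> - \<lfloor>a - R\<rfloor> - 1)"
    unfolding int_nbhd_eq by simp
  show "2*R - 1 \<le> real (card (int_nbhd a R))" "real (card (int_nbhd a R)) \<le> 2*R + 1"
    unfolding card using ceiling_correct[of "a + R"] floor_correct[of "a - R"] by linarith+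
qed

lemma bij_betw_supball_Z_PiE:
  "bij_betw (\<lambda>z i. z $ i) (supball_Z x R) (\<Pi>\<^sub>E i\<in>UNIV. int_nbhd (x $ i) R)"
proof (rule bij_betwI')
  show "\<And>y. y \<in> (\<Pi>\<^sub>E i\<in>UNIV. int_nbhd (x $ i) R) \<Longrightarrow> \<exists>a\<in>supball_Z x R. y = (\<lambda>i. a $ i)"
    by (rule_tac x="\<chi> i. y i" in bexI) (auto simp: mem_supball_Z_iff int_nbhd_def PiE_iff)
qed (auto simp: vec_eq_iff fun_eq_iff mem_supball_Z_iff int_nbhd_def)

lemma finite_supball_Z [simp]: "finite (supball_Z x R)"
  using bij_betw_finite[OF bij_betw_supball_Z_PiE]
  by (simp add: finite_PiE int_nbhd_eq)

lemma card_supball_Z: "card (supball_Z x R) = (\<Prod>i\<in>UNIV. card (int_nbhd (x $ i) R))"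
  using bij_betw_same_card[OF bij_betw_supball_Z_PiE] by (simp add: card_PiE)

lemma card_supball_Z_bounds:
  fixes x :: "real^'n"
  assumes R: "R \<ge> 1"
  shows "(2*R - 1) ^ CARD('n) \<le> real (card (supball_Z x R))"
    and "real (card (supball_Z x R)) \<le> (2*R + 1) ^ CARD('n)"
proof -
  have card: "real (card (supball_Z x R)) = (\<Prod>i\<in>UNIV. real (card (int_nbhd (x $ i) R)))"
    by (simp add: card_supball_Z)
  have "(\<Prod>i\<in>(UNIV::'n set). 2*R - 1) \<le> (\<Prod>i\<in>UNIV. real (card (int_nbhd (x $ i) R)))"
    by (rule prod_mono) (use R card_int_nbhd_bounds(1)[OF R] in auto)
  then show "(2*R - 1) ^ CARD('n) \<le> real (card (supball_Z x R))"
    unfolding card by simp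
  have "(\<Prod>i\<in>UNIV. real (card (int_nbhd (x $ i) R))) \<le> (\<Prod>i\<in>(UNIV::'n set). 2*R + 1)"
    by (rule prod_mono) (use card_int_nbhd_bounds(2)[OF R] in auto)
  then show "real (card (supball_Z x R)) \<le> (2*R + 1) ^ CARD('n)"
    unfolding card by simp
qed

lemma card_supball_Z_pos: "R \<ge> 1 \<Longrightarrow> 0 < real (card (supball_Z (x::real^'n) R))"
  using card_supball_Z_bounds(1)[of R x] zero_less_power[of "2*R - 1" "CARD('n)"] by linarith

lemma card_supball_Z_ratio_le:
  fixes u y :: "real^'n"
  assumes R: "R \<ge> 1"
  shows "real (card (supball_Z u (real CARD('n) * (R+1)))) / real (card (supball_Z y R))
         \<le> (5 * real CARD('n)) ^ CARD('n)"
proof -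
  define n where "n = real CARD('n)"
  have n1: "n \<ge> 1" unfolding n_def by simp
  have R'1: "n * (R+1) \<ge> 1"
    using mult_mono[of 1 n 1 "R+1"] n1 R by simp
  have "n \<le> n * R"
    using mult_left_mono[OF R, of n] n1 by simp
  moreover have "2*(n*(R+1)) + 1 = 2*(n*R) + 2*n + 1" "5*n*R = 5*(n*R)"
    by (simp_all add: algebra_simps)
  ultimately have "2*(n*(R+1)) + 1 \<le> 5*n*R"
    using n1 by linarith
  then have "real (card (supball_Z u (n * (R+1)))) \<le> (5*n*R) ^ CARD('n)"
    using card_supball_Z_bounds(2)[OF R'1, of u] power_mono[of "2*(n*(R+1))+1" "5*n*R" "CARD('n)"] R'1
    by linarith
  moreover have "R ^ CARD('n) \<le> real (card (supball_Z y R))"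
    using card_supball_Z_bounds(1)[OF R, of y] power_mono[of R "2*R - 1" "CARD('n)"] R by linarith
  ultimately have "real (card (supball_Z u (n * (R+1)))) / real (card (supball_Z y R))
      \<le> (5*n*R) ^ CARD('n) / R ^ CARD('n)"
    using R by (intro frac_le) auto
  also have "\<dots> = (5*n) ^ CARD('n)"
    using R by (simp add: power_mult_distrib)
  finally show ?thesis unfolding n_def .
qed

lemma card_supball_Z_enlarge_le:
  fixes x :: "real^'n"
  assumes R: "R \<ge> real CARD('n) * (real Q + 1) + 1"
  shows "real (card (supball_Z x (R + real Q))) \<le> 3 * real (card (supball_Z x R))"
proof -
  define n where "n = real CARD('n)"
  define h where "h = (2 * real Q + 2) / (2*R - 1)"
  have n1: "n \<ge> 1" unfolding n_def by simp
  then have R1: "R \<ge> 1"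
    using R unfolding n_def[symmetric] by (smt (verit) mult_nonneg_nonneg of_nat_0_le_iff)
  have pos: "2*R - 1 > 0" using R1 by simp
  have h0: "h \<ge> 0" unfolding h_def using pos by simp
  have "n * (2 * real Q + 2) \<le> 2*R - 1"
    using R n1 unfolding n_def[symmetric] by (simp add: algebra_simps)
  then have nh: "n * h \<le> 1"
    unfolding h_def using pos by (simp add: field_simps)
  have "real (card (supball_Z x (R + real Q))) \<le> (2 * (R + real Q) + 1) ^ CARD('n)"
    using R1 by (intro card_supball_Z_bounds(2)) simp
  also have "\<dots> = (2*R - 1) ^ CARD('n) * (1 + h) ^ CARD('n)"
    unfolding h_def using pos by (simp add: field_simps flip: power_mult_distrib)
  also have "(1 + h) ^ CARD('n) \<le> exp h ^ CARD('n)"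
    using h0 by (intro power_mono) auto
  also have "\<dots> = exp (n * h)"
    unfolding n_def by (simp add: exp_of_nat_mult)
  also have "\<dots> \<le> 3"
    using nh exp_le by (smt (verit) exp_mono)
  also have "(2*R - 1) ^ CARD('n) \<le> real (card (supball_Z x R))"
    by (rule card_supball_Z_bounds(1)[OF R1])
  finally show ?thesis
    using pos by (simp add: mult.commute mult_right_mono)
qed

lemma supball_Z_translate:
  "supball_Z (x + int_to_real t) R = translate (supball_Z x R) t"
proof -
  have "z \<in> supball_Z (x + int_to_real t) R \<longleftrightarrow> z - t \<in> supball_Z x R" for z
    by (simp add: mem_supball_Z_iff algebra_simps)
  then show ?thesis
    unfolding translate_def by (auto simp: image_iff intro!: bexI[where x="_ - t"])
qed

lemma mem_translate_iff: "y \<in> translate S t \<longleftrightarrow> y - t \<in> S"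
  unfolding translate_def by (auto simp: image_iff intro!: bexI[where x="y - t"])

section \<open>Upper density\<close>

definition local_density :: "(int^'n) set \<Rightarrow> real^'n \<Rightarrow> real \<Rightarrow> real" where
  "local_density G x R = real (card (supball_Z x R \<inter> G)) / real (card (supball_Z x R))"

lemma upper_density_eq_SUP: "upper_density R G = (SUP x. local_density G x R)"
  unfolding upper_density_def local_density_def by simp

lemma local_density_nonneg: "0 \<le> local_density G x R"
  unfolding local_density_def by simp

lemma local_density_le_1: "local_density G (x::real^'n) R \<le> 1"
proof -
  have "card (supball_Z x R \<inter> G) \<le> card (supball_Z x R)"
    by (rule card_mono) auto
  then show ?thesis
    unfolding local_density_def by (cases "card (supball_Z x R) = 0") (auto simp: divide_le_eq_1)
qed

lemma local_density_le_upper_density: "local_density G (x::real^'n) R \<le> upper_density R G"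
  unfolding upper_density_eq_SUP
  by (rule cSUP_upper) (auto intro: bdd_aboveI[where M=1] local_density_le_1)

lemma upper_density_leI: "(\<And>x::real^'n. local_density G x R \<le> c) \<Longrightarrow> upper_density R G \<le> c"
  unfolding upper_density_eq_SUP by (rule cSUP_least) auto

lemma upper_density_nonneg: "0 \<le> upper_density R (G::(int^'n) set)"
  using local_density_le_upper_density[of G 0 R] local_density_nonneg[of G 0 R] by linarith

lemma upper_density_mono:
  assumes "G \<subseteq> H" shows "upper_density R (G::(int^'n) set) \<le> upper_density R H"
proof (rule upper_density_leI)
  fix x :: "real^'n"
  have "card (supball_Z x R \<inter> G) \<le> card (supball_Z x R \<inter> H)"
    using assms by (intro card_mono) auto
  then have "local_density G x R \<le> local_density H x R"
    unfolding local_density_def by (simp add: divide_right_mono)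
  then show "local_density G x R \<le> upper_density R H"
    using local_density_le_upper_density[of H x R] by linarith
qed

lemma upper_density_Un_le:
  "upper_density R (G \<union> H) \<le> upper_density R (G::(int^'n) set) + upper_density R H"
proof (rule upper_density_leI)
  fix x :: "real^'n"
  have "card (supball_Z x R \<inter> (G \<union> H)) \<le> card (supball_Z x R \<inter> G) + card (supball_Z x R \<inter> H)"
    unfolding Int_Un_distrib by (rule card_Un_le)
  then have "local_density (G \<union> H) x R \<le> local_density G x R + local_density H x R"
    unfolding local_density_def add_divide_distrib[symmetric]
    by (intro divide_right_mono) (simp_all flip: of_nat_add)
  then show "local_density (G \<union> H) x R \<le> upper_density R G + upper_density R H"
    using local_density_le_upper_density[of G x R] local_density_le_upper_density[of H x R]
    by linarith
qed

lemma upper_density_UN_le: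
  "finite I \<Longrightarrow> upper_density R (\<Union>i\<in>I. S i) \<le> (\<Sum>i\<in>I. upper_density R (S i::(int^'n) set))"
proof (induction I rule: finite_induct)
  case empty
  have "upper_density R ({}::(int^'n) set) \<le> 0"
    by (rule upper_density_leI) (simp add: local_density_def)
  then show ?case by simp
next
  case (insert i I)
  then show ?case
    using upper_density_Un_le[of R "S i" "\<Union>j\<in>I. S j"] by simp
qed

lemma local_density_translate:
  "local_density (translate G t) (x::real^'n) R = local_density G (x - int_to_real t) R"
proof -
  have ball: "supball_Z x R = (\<lambda>g. g + t) ` supball_Z (x - int_to_real t) R"
    using supball_Z_translate[of "x - int_to_real t" t R] by (simp add: translate_def)
  have "supball_Z x R \<inter> translate G t = (\<lambda>g. g + t) ` (supball_Z (x - int_to_real t) R \<inter> G)"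
    unfolding ball translate_def by auto
  then show ?thesis
    unfolding local_density_def by (simp add: ball card_image)
qed

lemma upper_density_translate_le:
  "upper_density R (translate G t) \<le> upper_density R (G::(int^'n) set)"
  by (rule upper_density_leI) (simp add: local_density_translate local_density_le_upper_density)

section \<open>Images under maps close to an orthogonal map\<close>

lemma orthogonal_matrix_norm_diff:
  fixes P :: "real^'n^'n"
  assumes "orthogonal_matrix P"
  shows "norm (P *v u - v) = norm (u - transpose P *v v)"
proof -
  have "P *v (transpose P *v v) = (P ** transpose P) *v v"
    by (rule matrix_vector_mul_assoc)
  also have "\<dots> = v"
    using assms unfolding orthogonal_matrix_def by simp
  finally have "P *v u - v = P *v (u - transpose P *v v)"
    by (simp only: matrix_vector_mult_diff_distrib)
  moreover have "orthogonal_transformation ((*v) P)"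
    using assms by (simp add: orthogonal_transformation_matrix matrix_vector_mul_linear)
  ultimately show ?thesis
    by (simp only: orthogonal_transformation_norm)
qed

text \<open>Sup-distances are compared across an orthogonal map through the Euclidean norm,
  at the cost of a factor \<open>CARD('n)\<close>.\<close>

lemma abs_component_less_of_norm_eq:
  fixes x y :: "real^'n"
  assumes "norm y = norm x" and "\<And>k. \<bar>x $ k\<bar> < r"
  shows "\<bar>y $ i\<bar> < real CARD('n) * r"
proof -
  have "(\<Sum>k\<in>UNIV. \<bar>x $ k\<bar>) < (\<Sum>k\<in>(UNIV::'n set). r)"
    by (rule sum_strict_mono) (auto simp: assms)
  then show ?thesis
    using norm_le_l1_cart[of x] component_le_norm_cart[of y i] assms(1) by simp
qed

lemma relatively_dense_image_near_isometry:
  fixes P :: "real^'n^'n" and G :: "(int^'n) set"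
  assumes P: "orthogonal_matrix P" and G: "relatively_dense G"
    and h: "\<And>z i. z \<in> G \<Longrightarrow> \<bar>real_of_int (h z $ i) - (P *v int_to_real z + c) $ i\<bar> \<le> b"
    and b: "b \<ge> 0"
  shows "relatively_dense (h ` G)"
proof -
  obtain RG where RG: "RG > 0" "\<And>x R. R \<ge> RG \<Longrightarrow> \<exists>g\<in>G. g \<in> supball_Z x R"
    using G unfolding relatively_dense_def by blast
  have "\<exists>g\<in>h ` G. g \<in> supball_Z x R" if R: "R \<ge> real CARD('n) * RG + b" for x R
  proof -
    obtain g where g: "g \<in> G" "g \<in> supball_Z (transpose P *v (x - c)) RG"
      using RG(2) by blast
    have "\<bar>(int_to_real g - transpose P *v (x - c)) $ i\<bar> < RG" for i
      using g(2) unfolding mem_supball_Z_iff by (simp add: abs_minus_commute)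
    then have near: "\<bar>(P *v int_to_real g - (x - c)) $ i\<bar> < real CARD('n) * RG" for i
      by (rule abs_component_less_of_norm_eq[OF orthogonal_matrix_norm_diff[OF P]])
    have "\<bar>x $ i - real_of_int (h g $ i)\<bar> < R" for i
      using near[of i] h[OF g(1), of i] R by simp
    then show ?thesis
      using g(1) by (auto simp: mem_supball_Z_iff)
  qed
  moreover have "real CARD('n) * RG + b > 0"
    using RG(1) b by (simp add: add_pos_nonneg)
  ultimately show ?thesis
    unfolding relatively_dense_def by blast
qed

lemma uniformly_discrete_int: "uniformly_discrete (G::(int^'n) set)"
  unfolding uniformly_discrete_def
proof (intro exI[of _ "1/2"] conjI allI impI ballI)
  fix x :: "real^'n" and r :: real and a b
  assume "r \<le> 1/2" "a \<in> G \<inter> supball_Z x r" "b \<in> G \<inter> supball_Z x r"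
  then have "\<bar>real_of_int (a $ i) - real_of_int (b $ i)\<bar> < 1" for i
    by (auto simp: mem_supball_Z_iff dest!: spec[of _ i])
  then have "\<bar>a $ i - b $ i\<bar> < 1" for i
    by (metis of_int_abs of_int_diff of_int_less_1_iff)
  then show "a = b"
    by (simp add: vec_eq_iff)
qed simp

lemma supball_Z_inter_image_subset:
  fixes P :: "real^'n^'n" and S :: "(int^'n) set" and f :: "int^'n \<Rightarrow> int^'n"
  assumes P: "orthogonal_matrix P"
    and f: "\<And>z i. z \<in> S \<Longrightarrow> \<bar>real_of_int (f z $ i) - (P *v int_to_real z + c) $ i\<bar> \<le> 1/2"
  shows "supball_Z y R \<inter> f ` S
    \<subseteq> f ` (supball_Z (transpose P *v (y - c)) (real CARD('n) * (R + 1)) \<inter> S)"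
proof
  fix q assume "q \<in> supball_Z y R \<inter> f ` S"
  then obtain z where z: "z \<in> S" "q = f z" "q \<in> supball_Z y R" by auto
  have "\<bar>(P *v int_to_real z - (y - c)) $ i\<bar> < R + 1" for i
  proof -
    have "\<bar>y $ i - real_of_int (f z $ i)\<bar> < R"
      using z(2,3) by (simp add: mem_supball_Z_iff)
    then show ?thesis
      using f[OF z(1), of i] unfolding abs_le_iff abs_less_iff by (simp; linarith)
  qed
  then have "\<bar>(int_to_real z - transpose P *v (y - c)) $ k\<bar> < real CARD('n) * (R + 1)" for k
    by (rule abs_component_less_of_norm_eq[OF orthogonal_matrix_norm_diff[OF P, symmetric]])
  then have "z \<in> supball_Z (transpose P *v (y - c)) (real CARD('n) * (R + 1))"
    by (simp add: mem_supball_Z_iff abs_minus_commute)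
  then show "q \<in> f ` (supball_Z (transpose P *v (y - c)) (real CARD('n) * (R + 1)) \<inter> S)"
    using z by auto
qed

lemma upper_density_image_le:
  fixes P :: "real^'n^'n" and S :: "(int^'n) set" and f :: "int^'n \<Rightarrow> int^'n"
  assumes P: "orthogonal_matrix P"
    and f: "\<And>z i. z \<in> S \<Longrightarrow> \<bar>real_of_int (f z $ i) - (P *v int_to_real z + c) $ i\<bar> \<le> 1/2"
    and R: "R \<ge> 1"
  shows "upper_density R (f ` S)
    \<le> (5 * real CARD('n)) ^ CARD('n) * upper_density (real CARD('n) * (R+1)) S"
proof (rule upper_density_leI)
  fix y :: "real^'n"
  define R' where "R' = real CARD('n) * (R+1)"
  define u where "u = transpose P *v (y - c)"
  have R'1: "R' \<ge> 1"
    unfolding R'_def using mult_mono[of 1 "real CARD('n)" 1 "R+1"] R by simp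
  have "card (supball_Z y R \<inter> f ` S) \<le> card (f ` (supball_Z u R' \<inter> S))"
    unfolding u_def R'_def by (intro card_mono supball_Z_inter_image_subset[OF P f]) auto
  also have "\<dots> \<le> card (supball_Z u R' \<inter> S)"
    by (intro card_image_le) auto
  finally have "local_density (f ` S) y R \<le> real (card (supball_Z u R' \<inter> S)) / real (card (supball_Z y R))"
    unfolding local_density_def by (simp add: divide_right_mono)
  also have "\<dots> = local_density S u R' * (real (card (supball_Z u R')) / real (card (supball_Z y R)))"
    unfolding local_density_def using card_supball_Z_pos[OF R'1, of u] by simp
  also have "\<dots> \<le> upper_density R' S * (5 * real CARD('n)) ^ CARD('n)"
    using card_supball_Z_ratio_le[OF R, of u y]
    by (intro mult_mono) (auto simp: R'_def local_density_le_upper_density upper_density_nonneg)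
  finally show "local_density (f ` S) y R
      \<le> (5 * real CARD('n)) ^ CARD('n) * upper_density (real CARD('n) * (R+1)) S"
    unfolding R'_def by (simp add: mult.commute)
qed

section \<open>Sets with gaps along an axis\<close>

text \<open>The translates of \<open>A\<close> by \<open>0, \<dots>, Q - 1\<close> along \<open>e\<^sub>j\<close> are pairwise disjoint.\<close>

lemma card_le_of_gaps:
  fixes A :: "(int^'n) set" and j :: 'n and Q :: nat
  assumes sub: "A \<subseteq> supball_Z x R"
    and gap: "\<And>z t. z \<in> A \<Longrightarrow> 1 \<le> t \<Longrightarrow> t \<le> int Q \<Longrightarrow> z + axis j t \<notin> A"
  shows "Q * card A \<le> card (supball_Z x (R + real Q))"
proof -
  define T where "T s = (\<lambda>z. z + axis j (int s)) ` A" for s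
  have finA: "finite A"
    by (rule finite_subset[OF sub]) simp
  have T_sub: "T s \<subseteq> supball_Z x (R + real Q)" if "s < Q" for s
  proof
    fix q assume "q \<in> T s"
    then obtain z where z: "z \<in> A" "q = z + axis j (int s)"
      unfolding T_def by auto
    have zi: "\<bar>x $ i - real_of_int (z $ i)\<bar> < R" for i
      using z(1) sub by (auto simp: mem_supball_Z_iff)
    have "\<bar>x $ i - real_of_int (q $ i)\<bar> < R + real Q" for i
      using zi[of i] that by (auto simp: z(2) axis_def abs_less_iff)
    then show "q \<in> supball_Z x (R + real Q)"
      by (simp add: mem_supball_Z_iff)
  qed
  have T_disj: "T s \<inter> T s' = {}" if "s < s'" "s' < Q" for s s'
  proof (rule ccontr)
    assume "T s \<inter> T s' \<noteq> {}"
    then obtain z z' where "z \<in> A" "z' \<in> A" "z + axis j (int s) = z' + axis j (int s')"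
      unfolding T_def by auto
    moreover from this(3) have "z $ i = (z' + axis j (int s' - int s)) $ i" for i
      by (cases "i = j") (auto simp: axis_def dest: arg_cong[where f="\<lambda>v. v $ i"])
    then have "z = z' + axis j (int s' - int s)"
      by (simp add: vec_eq_iff)
    ultimately show False
      using gap[of z' "int s' - int s"] that by auto
  qed
  have "Q * card A = card (\<Union>s<Q. T s)"
  proof -
    have "card (\<Union>s<Q. T s) = (\<Sum>s<Q. card (T s))"
      using T_disj finA by (intro card_UN_disjoint) (auto simp: T_def nat_neq_iff)
    also have "\<dots> = Q * card A"
      unfolding T_def by (simp add: card_image)
    finally show ?thesis by simp
  qed
  also have "\<dots> \<le> card (supball_Z x (R + real Q))"
    using T_sub by (intro card_mono) auto
  finally show ?thesis .
qed

lemma upper_density_le_of_gaps: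
  fixes Y :: "(int^'n) set" and j :: 'n and Q :: nat
  assumes Q: "Q \<ge> 1"
    and gap: "\<And>z t. z \<in> Y \<Longrightarrow> 1 \<le> t \<Longrightarrow> t \<le> int Q \<Longrightarrow> z + axis j t \<notin> Y"
    and R: "R \<ge> real CARD('n) * (real Q + 1) + 1"
  shows "upper_density R Y \<le> 3 / real Q"
proof (rule upper_density_leI)
  fix x :: "real^'n"
  have R1: "R \<ge> 1"
    using R by (smt (verit) mult_nonneg_nonneg of_nat_0_le_iff)
  have "Q * card (supball_Z x R \<inter> Y) \<le> card (supball_Z x (R + real Q))"
    using gap by (intro card_le_of_gaps[where j=j]) auto
  then have "real Q * real (card (supball_Z x R \<inter> Y)) \<le> real (card (supball_Z x (R + real Q)))"
    by (metis of_nat_le_iff of_nat_mult)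
  also have "\<dots> \<le> 3 * real (card (supball_Z x R))"
    by (rule card_supball_Z_enlarge_le[OF R])
  finally show "local_density Y x R \<le> 3 / real Q"
    unfolding local_density_def
    using card_supball_Z_pos[OF R1, of x] Q by (simp add: field_simps)
qed

section \<open>Rational and irrational rows\<close>

lemma eventually_le_dist_ints:
  fixes x :: real
  assumes "x \<notin> \<int>"
  shows "\<forall>\<^sub>F \<delta> in at_right 0. \<forall>m::int. \<delta> \<le> \<bar>x - real_of_int m\<bar>"
proof -
  have fl: "real_of_int \<lfloor>x\<rfloor> < x" and cl: "x < real_of_int \<lceil>x\<rceil>"
    using assms of_int_floor_le[of x] le_of_int_ceiling[of x]
    by (metis Ints_of_int order_less_le)+
  define \<eta> where "\<eta> = min (x - real_of_int \<lfloor>x\<rfloor>) (real_of_int \<lceil>x\<rceil> - x)"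
  have "\<lceil>x\<rceil> \<le> \<lfloor>x\<rfloor> + 1"
    by (simp add: ceiling_le_iff)
  then have \<eta>_le: "\<eta> \<le> \<bar>x - real_of_int m\<bar>" for m
    unfolding \<eta>_def using fl cl by (cases "m \<le> \<lfloor>x\<rfloor>") (auto simp flip: of_int_le_iff)
  show ?thesis
    unfolding eventually_at_right_field
  proof (intro exI[of _ \<eta>] conjI allI impI)
    show "0 < \<eta>"
      unfolding \<eta>_def using fl cl by simp
    show "\<delta> \<le> \<bar>x - real_of_int m\<bar>" if "\<delta> < \<eta>" for \<delta> m
      using that \<eta>_le[of m] by linarith
  qed
qed

definition multiples_far_from_ints :: "real \<Rightarrow> nat \<Rightarrow> real \<Rightarrow> bool" where
  "multiples_far_from_ints \<alpha> Q \<delta> \<longleftrightarrow>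
     (\<forall>t::int. 1 \<le> t \<and> t \<le> int Q \<longrightarrow> (\<forall>m::int. \<delta> \<le> \<bar>real_of_int t * \<alpha> - real_of_int m\<bar>))"

lemma eventually_multiples_far_from_ints:
  assumes "\<alpha> \<notin> \<rat>"
  shows "\<forall>\<^sub>F \<delta> in at_right 0. multiples_far_from_ints \<alpha> Q \<delta>"
proof -
  have "real_of_int t * \<alpha> \<notin> \<int>" if "1 \<le> t" for t :: int
  proof
    assume "real_of_int t * \<alpha> \<in> \<int>"
    then have "real_of_int t * \<alpha> / real_of_int t \<in> \<rat>"
      using Ints_subset_Rats by (intro Rats_divide) auto
    then show False
      using assms that by simp
  qed
  then have "\<forall>\<^sub>F \<delta> in at_right 0. \<forall>t\<in>{1..int Q}. \<forall>m::int. \<delta> \<le> \<bar>real_of_int t * \<alpha> - real_of_int m\<bar>"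
    by (intro eventually_ball_finite) (auto intro: eventually_le_dist_ints)
  then show ?thesis
    unfolding multiples_far_from_ints_def by (rule eventually_mono) auto
qed

lemma common_denominator:
  assumes "finite J" "\<forall>j\<in>J. f j \<in> \<rat>"
  shows "\<exists>d::int. d > 0 \<and> (\<forall>v::'a \<Rightarrow> int. real_of_int d * (\<Sum>j\<in>J. f j * real_of_int (v j)) \<in> \<int>)"
  using assms
proof (induction J rule: finite_induct)
  case empty
  show ?case by (intro exI[of _ 1]) auto
next
  case (insert a J)
  then obtain d where d: "d > 0" "\<And>v. real_of_int d * (\<Sum>j\<in>J. f j * real_of_int (v j)) \<in> \<int>"
    by auto
  obtain p q where pq: "q > 0" "f a = real_of_int p / real_of_int q"
    using insert.prems by (metis Rats_cases' insert_iff of_int_of_nat_eq)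
  have "real_of_int (d * q) * (\<Sum>j\<in>insert a J. f j * real_of_int (v j))
      = real_of_int q * (real_of_int d * (\<Sum>j\<in>J. f j * real_of_int (v j)))
        + real_of_int (d * p * v a)" for v
    using insert.hyps pq by (simp add: algebra_simps)
  then show ?case
    using d pq by (intro exI[of _ "d * q"]) auto
qed

definition int_isolated_row :: "real^'n^'n \<Rightarrow> real \<Rightarrow> 'n \<Rightarrow> bool" where
  "int_isolated_row P \<delta> i \<longleftrightarrow> (\<forall>v::int^'n. \<forall>w::int.
     \<bar>(P *v int_to_real v) $ i - real_of_int w\<bar> < \<delta> \<longrightarrow> (P *v int_to_real v) $ i = real_of_int w)"

text \<open>A rational row of \<open>P\<close> takes values in \<open>\<int>/d\<close> on \<open>\<int>\<^sup>n\<close>, so for small \<open>\<delta>\<close> it is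
  \<open>int_isolated_row\<close>; a row with an irrational entry makes the rounding boundary sparse along
  that coordinate.\<close>

definition adapted_rows :: "real^'n^'n \<Rightarrow> nat \<Rightarrow> real \<Rightarrow> bool" where
  "adapted_rows P Q \<delta> \<longleftrightarrow>
     (\<forall>i. int_isolated_row P \<delta> i \<or> (\<exists>j. multiples_far_from_ints (P $ i $ j) Q (2 * \<delta>)))"

lemma eventually_int_isolated_row:
  fixes P :: "real^'n^'n"
  assumes "\<forall>j. P $ i $ j \<in> \<rat>"
  shows "\<forall>\<^sub>F \<delta> in at_right 0. int_isolated_row P \<delta> i"
proof -
  obtain d :: int where d: "d > 0"
    and dint: "\<And>v::'n \<Rightarrow> int. real_of_int d * (\<Sum>j\<in>UNIV. P $ i $ j * real_of_int (v j)) \<in> \<int>"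
    using common_denominator[of UNIV "\<lambda>j. P $ i $ j"] assms by auto
  have "int_isolated_row P \<delta> i" if "\<delta> < 1 / real_of_int d" for \<delta>
    unfolding int_isolated_row_def
  proof (intro allI impI)
    fix v :: "int^'n" and w :: int
    define x where "x = (P *v int_to_real v) $ i"
    assume "\<bar>(P *v int_to_real v) $ i - real_of_int w\<bar> < \<delta>"
    then have "real_of_int d * \<bar>x - real_of_int w\<bar> < real_of_int d * \<delta>"
      using d unfolding x_def by simp
    also have "\<dots> < 1"
      using that d by (simp add: field_simps)
    finally have "real_of_int d * \<bar>x - real_of_int w\<bar> < 1" .
    moreover obtain m where m: "real_of_int d * x = real_of_int m"
      using dint[of "\<lambda>j. v $ j"] unfolding x_def by (auto simp: matrix_vector_mult_def elim: Ints_cases)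
    moreover have "\<bar>real_of_int d * x - real_of_int d * real_of_int w\<bar> = real_of_int d * \<bar>x - real_of_int w\<bar>"
      using d by (simp add: abs_mult flip: right_diff_distrib)
    ultimately have "\<bar>real_of_int (m - d * w)\<bar> < 1"
      by simp
    then have "m = d * w"
      by linarith
    then show "x = real_of_int w"
      using m d by simp
  qed
  then show ?thesis
    unfolding eventually_at_right_field using d by (intro exI[of _ "1 / real_of_int d"]) auto
qed

lemma ex_adapted_rows: "\<exists>\<delta>>0. adapted_rows (P::real^'n^'n) Q \<delta>"
proof -
  have "\<forall>\<^sub>F \<delta> in at_right 0. int_isolated_row P \<delta> i \<or> (\<exists>j. multiples_far_from_ints (P $ i $ j) Q (2 * \<delta>))"
    for i
  proof (cases "\<forall>j. P $ i $ j \<in> \<rat>")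
    case True
    then show ?thesis
      by (rule eventually_mono[OF eventually_int_isolated_row]) simp
  next
    case False
    then obtain j where "P $ i $ j \<notin> \<rat>" by auto
    from eventually_multiples_far_from_ints[OF this, of Q]
    obtain b where "b > 0" "\<And>\<delta>. 0 < \<delta> \<Longrightarrow> \<delta> < b \<Longrightarrow> multiples_far_from_ints (P $ i $ j) Q \<delta>"
      unfolding eventually_at_right_field by auto
    then show ?thesis
      unfolding eventually_at_right_field
      by (intro exI[of _ "b / 2"] conjI allI impI disjI2 exI[of _ j]) auto
  qed
  then have "\<forall>\<^sub>F \<delta> in at_right 0. adapted_rows P Q \<delta>"
    unfolding adapted_rows_def by (rule eventually_all_finite)
  then show ?thesis
    unfolding eventually_at_right_field by (metis field_lbound_gt_zero)
qed

section \<open>Where discretization fails to commute with translation\<close>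

definition rounding_boundary :: "real^'n^'n \<Rightarrow> real \<Rightarrow> 'n \<Rightarrow> (int^'n) set" where
  "rounding_boundary P \<delta> i = {z. \<exists>k::int. \<bar>(P *v int_to_real z) $ i - 1/2 - real_of_int k\<bar> < \<delta>}"

definition rounding_mismatch :: "real^'n^'n \<Rightarrow> int^'n \<Rightarrow> int^'n \<Rightarrow> (int^'n) set" where
  "rounding_mismatch P v w = {z. discretization P (z + v) \<noteq> discretization P z + w}"

lemma matrix_vector_mult_int_to_real_add_axis:
  fixes P :: "real^'n^'n"
  shows "(P *v int_to_real (z + axis j t)) $ i = (P *v int_to_real z) $ i + real_of_int t * P $ i $ j"
proof -
  have "(P *v int_to_real (axis j t)) $ i = real_of_int t * P $ i $ j"
    by (simp add: matrix_vector_mult_def axis_def if_distrib[of real_of_int]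
        if_distrib[of "\<lambda>x. _ * x"] cong: if_cong)
  then show ?thesis
    by (simp add: int_to_real_add matrix_vector_right_distrib)
qed

lemma rounding_boundary_gap:
  assumes far: "multiples_far_from_ints (P $ i $ j) Q (2 * \<delta>)"
    and z: "z \<in> rounding_boundary P \<delta> i" and t: "1 \<le> t" "t \<le> int Q"
  shows "z + axis j t \<notin> rounding_boundary P \<delta> i"
proof
  assume "z + axis j t \<in> rounding_boundary P \<delta> i"
  then obtain k' where k': "\<bar>(P *v int_to_real z) $ i + real_of_int t * P $ i $ j - 1/2 - real_of_int k'\<bar> < \<delta>"
    by (auto simp: rounding_boundary_def matrix_vector_mult_int_to_real_add_axis)
  obtain k where k: "\<bar>(P *v int_to_real z) $ i - 1/2 - real_of_int k\<bar> < \<delta>"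
    using z unfolding rounding_boundary_def by auto
  have "\<bar>real_of_int t * P $ i $ j - real_of_int (k' - k)\<bar> < 2 * \<delta>"
    using k k' by simp
  then show False
    using far t unfolding multiples_far_from_ints_def by (meson not_less)
qed

lemma upper_density_rounding_boundary_le:
  fixes P :: "real^'n^'n"
  assumes "multiples_far_from_ints (P $ i $ j) Q (2 * \<delta>)" and "Q \<ge> 1"
    and "R \<ge> real CARD('n) * (real Q + 1) + 1"
  shows "upper_density R (rounding_boundary P \<delta> i) \<le> 3 / real Q"
  using assms by (intro upper_density_le_of_gaps[of Q _ j]) (auto dest: rounding_boundary_gap)

lemma rounding_mismatch_subset:
  fixes P :: "real^'n^'n"
  assumes close: "\<And>i. \<bar>(P *v int_to_real v) $ i - real_of_int (w $ i)\<bar> < \<delta>"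
  shows "rounding_mismatch P v w
     \<subseteq> (\<Union>i\<in>{i. (P *v int_to_real v) $ i \<noteq> real_of_int (w $ i)}. rounding_boundary P \<delta> i)"
proof
  fix z assume z: "z \<in> rounding_mismatch P v w"
  show "z \<in> (\<Union>i\<in>{i. (P *v int_to_real v) $ i \<noteq> real_of_int (w $ i)}. rounding_boundary P \<delta> i)"
  proof (rule ccontr)
    assume outside: "z \<notin> (\<Union>i\<in>{i. (P *v int_to_real v) $ i \<noteq> real_of_int (w $ i)}. rounding_boundary P \<delta> i)"
    have "discretization P (z + v) $ i = (discretization P z + w) $ i" for i
    proof -
      define a where "a = (P *v int_to_real z) $ i"
      define e where "e = (P *v int_to_real v) $ i - real_of_int (w $ i)"
      have "(P *v int_to_real (z + v)) $ i = (a + e) + real_of_int (w $ i)"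
        unfolding a_def e_def by (simp add: int_to_real_add matrix_vector_right_distrib)
      then have "discretization P (z + v) $ i = round_half (a + e) + w $ i"
        unfolding discretization_nth by (simp add: round_half_add_of_int)
      also have "round_half (a + e) = round_half a"
      proof (cases "e = 0")
        case False
        then have "z \<notin> rounding_boundary P \<delta> i"
          using outside unfolding e_def by auto
        then have "\<delta> \<le> \<bar>a - 1/2 - real_of_int k\<bar>" for k
          unfolding rounding_boundary_def a_def by (auto simp: not_less)
        then show ?thesis
          using close[of i] unfolding e_def by (intro round_half_stable) auto
      qed simp
      finally show ?thesis
        by (simp add: discretization_nth a_def)
    qed
    then show False
      using z unfolding rounding_mismatch_def by (simp add: vec_eq_iff)
  qed
qed

lemma upper_density_rounding_mismatch_le:
  fixes P :: "real^'n^'n"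
  assumes adapted: "adapted_rows P Q \<delta>"
    and close: "\<And>i. \<bar>(P *v int_to_real v) $ i - real_of_int (w $ i)\<bar> < \<delta>"
    and Q: "Q \<ge> 1" and R: "R \<ge> real CARD('n) * (real Q + 1) + 1"
  shows "upper_density R (rounding_mismatch P v w) \<le> real CARD('n) * (3 / real Q)"
proof -
  define I where "I = {i. (P *v int_to_real v) $ i \<noteq> real_of_int (w $ i)}"
  have "upper_density R (rounding_mismatch P v w) \<le> upper_density R (\<Union>i\<in>I. rounding_boundary P \<delta> i)"
    unfolding I_def by (intro upper_density_mono rounding_mismatch_subset close)
  also have "\<dots> \<le> (\<Sum>i\<in>I. upper_density R (rounding_boundary P \<delta> i))"
    by (intro upper_density_UN_le) simp
  also have "\<dots> \<le> (\<Sum>i\<in>I. 3 / real Q)"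
  proof (rule sum_mono)
    fix i assume "i \<in> I"
    then have "\<not> int_isolated_row P \<delta> i"
      using close[of i] unfolding I_def int_isolated_row_def by blast
    then obtain j where "multiples_far_from_ints (P $ i $ j) Q (2 * \<delta>)"
      using adapted unfolding adapted_rows_def by blast
    then show "upper_density R (rounding_boundary P \<delta> i) \<le> 3 / real Q"
      using Q R by (rule upper_density_rounding_boundary_le)
  qed
  also have "\<dots> \<le> real CARD('n) * (3 / real Q)"
    unfolding sum_constant by (intro mult_right_mono) (simp_all add: card_mono)
  finally show ?thesis .
qed

lemma translate_image_diff_subset:
  fixes f :: "int^'n \<Rightarrow> int^'n"
  shows "translate (f ` G) w - f ` G
    \<subseteq> f ` (translate G v - G) \<union> (\<lambda>z. f z + w) ` {z. f (z + v) \<noteq> f z + w}"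
proof
  fix q assume "q \<in> translate (f ` G) w - f ` G"
  then obtain x where x: "x \<in> G" "q = f x + w" "q \<notin> f ` G"
    by (auto simp: translate_def)
  show "q \<in> f ` (translate G v - G) \<union> (\<lambda>z. f z + w) ` {z. f (z + v) \<noteq> f z + w}"
  proof (cases "f (x + v) = f x + w")
    case True
    with x have "q = f (x + v)"
      by simp
    with x(3) have "x + v \<notin> G"
      by blast
    moreover have "x + v \<in> translate G v"
      using x(1) by (auto simp: translate_def)
    ultimately show ?thesis
      using \<open>q = f (x + v)\<close> by blast
  qed (use x in auto)
qed

lemma image_diff_translate_subset:
  fixes f :: "int^'n \<Rightarrow> int^'n"
  shows "f ` G - translate (f ` G) w
    \<subseteq> f ` (G - translate G v) \<union> (\<lambda>z. f (z + v)) ` {z. f (z + v) \<noteq> f z + w}"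
proof
  fix q assume "q \<in> f ` G - translate (f ` G) w"
  then obtain y where y: "y \<in> G" "q = f y" "q \<notin> translate (f ` G) w"
    by auto
  show "q \<in> f ` (G - translate G v) \<union> (\<lambda>z. f (z + v)) ` {z. f (z + v) \<noteq> f z + w}"
  proof (cases "y \<in> translate G v")
    case True
    then obtain x where x: "x \<in> G" "y = x + v"
      by (auto simp: translate_def)
    with y have "f (x + v) \<noteq> f x + w"
      by (auto simp: translate_def)
    with x y show ?thesis
      by auto
  qed (use y in auto)
qed

lemma sym_diff_translate_image_subset:
  fixes f :: "int^'n \<Rightarrow> int^'n" and v w :: "int^'n"
  defines "B \<equiv> {z. f (z + v) \<noteq> f z + w}"
  shows "sym_diff (translate (f ` G) w) (f ` G)
    \<subseteq> f ` sym_diff (translate G v) G \<union> (\<lambda>z. f (z + v)) ` B \<union> (\<lambda>z. f z + w) ` B"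
  using translate_image_diff_subset[of f G w v] image_diff_translate_subset[of f G w v]
  unfolding B_def by blast

lemma sym_diff_translate_diff_subset:
  "sym_diff (translate G (u - a)) G
     \<subseteq> translate (sym_diff (translate G u) G \<union> sym_diff (translate G a) G) (- a)"
  by (auto simp: mem_translate_iff algebra_simps)

lemma upper_density_sym_diff_translate_diff_le:
  "upper_density R (sym_diff (translate G (u - a)) G)
     \<le> upper_density R (sym_diff (translate G u) G) + upper_density R (sym_diff (translate (G::(int^'n) set) a) G)"
proof -
  have "upper_density R (sym_diff (translate G (u - a)) G)
      \<le> upper_density R (translate (sym_diff (translate G u) G \<union> sym_diff (translate G a) G) (- a))"
    by (rule upper_density_mono[OF sym_diff_translate_diff_subset])
  also have "\<dots> \<le> upper_density R (sym_diff (translate G u) G \<union> sym_diff (translate G a) G)"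
    by (rule upper_density_translate_le)
  also have "\<dots> \<le> upper_density R (sym_diff (translate G u) G) + upper_density R (sym_diff (translate G a) G)"
    by (rule upper_density_Un_le)
  finally show ?thesis .
qed

lemma upper_density_sym_diff_discretization_le:
  fixes P :: "real^'n^'n" and G :: "(int^'n) set" and v w :: "int^'n"
  assumes P: "orthogonal_matrix P" and R: "R \<ge> 1"
  defines "K \<equiv> (5 * real CARD('n)) ^ CARD('n)" and "R' \<equiv> real CARD('n) * (R + 1)"
  shows "upper_density R (sym_diff (translate (discretization P ` G) w) (discretization P ` G))
    \<le> K * upper_density R' (sym_diff (translate G v) G) + 2 * K * upper_density R' (rounding_mismatch P v w)"
proof -
  define f where "f = discretization P"
  define B where "B = rounding_mismatch P v w"
  have "upper_density R (sym_diff (translate (f ` G) w) (f ` G))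
      \<le> upper_density R (f ` sym_diff (translate G v) G \<union> (\<lambda>z. f (z + v)) ` B \<union> (\<lambda>z. f z + w) ` B)"
    unfolding B_def rounding_mismatch_def f_def by (intro upper_density_mono sym_diff_translate_image_subset)
  also have "\<dots> \<le> upper_density R (f ` sym_diff (translate G v) G)
      + upper_density R ((\<lambda>z. f (z + v)) ` B) + upper_density R ((\<lambda>z. f z + w) ` B)"
    using upper_density_Un_le[of R "f ` sym_diff (translate G v) G \<union> (\<lambda>z. f (z + v)) ` B"]
      upper_density_Un_le[of R "f ` sym_diff (translate G v) G"] by (meson add_right_mono order_trans)
  also have "upper_density R (f ` sym_diff (translate G v) G) \<le> K * upper_density R' (sym_diff (translate G v) G)"
    unfolding K_def R'_def f_def
    using discretization_dist_le by (intro upper_density_image_le[OF P _ R, of _ _ 0]) auto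
  also have "upper_density R ((\<lambda>z. f (z + v)) ` B) \<le> K * upper_density R' B"
    unfolding K_def R'_def f_def
    using discretization_dist_le[of P "_ + v"]
    by (intro upper_density_image_le[OF P _ R, of _ _ "P *v int_to_real v"])
      (simp add: int_to_real_add matrix_vector_right_distrib)
  also have "upper_density R ((\<lambda>z. f z + w) ` B) \<le> K * upper_density R' B"
    unfolding K_def R'_def f_def
    using discretization_dist_le by (intro upper_density_image_le[OF P _ R, of _ _ "int_to_real w"]) simp
  finally show ?thesis
    unfolding f_def B_def by simp
qed

section \<open>Almost periods of the discretized pattern\<close>

definition frac_cell :: "nat \<Rightarrow> real^'n \<Rightarrow> int^'n" where
  "frac_cell m x = (\<chi> i. \<lfloor>frac (x $ i) * real m\<rfloor>)"

lemma finite_range_frac_cell: "finite (range (frac_cell m :: real^'n \<Rightarrow> int^'n))"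
proof -
  have "0 \<le> frac y * real m" "frac y * real m \<le> real m" for y
    using frac_lt_1[of y] by (simp_all add: mult_left_le_one_le less_imp_le)
  then have cell: "0 \<le> real_of_int \<lfloor>frac y * real m\<rfloor>" "real_of_int \<lfloor>frac y * real m\<rfloor> \<le> real m" for y
    by (simp, meson floor_le_iff less_le_trans not_less of_int_floor_le)
  have "frac_cell m x \<in> supball_Z 0 (real m + 1)" for x :: "real^'n"
    unfolding mem_supball_Z_iff frac_cell_def
  proof
    fix i
    show "\<bar>0 $ i - real_of_int ((\<chi> i. \<lfloor>frac (x $ i) * real m\<rfloor>) $ i)\<bar> < real m + 1"
      using cell[of "x $ i"] by (simp; linarith)
  qed
  then show ?thesis
    by (meson finite_subset finite_supball_Z image_subsetI)
qed

lemma frac_cell_eq_imp_close: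
  assumes m: "m > 0" and cell: "frac_cell m x = frac_cell m y"
  shows "\<bar>(x - y) $ i - real_of_int (\<lfloor>x $ i\<rfloor> - \<lfloor>y $ i\<rfloor>)\<bar> < 1 / real m"
proof -
  have "\<lfloor>frac (x $ i) * real m\<rfloor> = \<lfloor>frac (y $ i) * real m\<rfloor>"
    using cell unfolding frac_cell_def by (simp add: vec_eq_iff)
  then have "\<bar>frac (x $ i) * real m - frac (y $ i) * real m\<bar> < 1"
    using floor_correct[of "frac (x $ i) * real m"] floor_correct[of "frac (y $ i) * real m"] by linarith
  then have "\<bar>frac (x $ i) - frac (y $ i)\<bar> * real m < 1"
    by (simp add: abs_mult flip: left_diff_distrib)
  then show ?thesis
    using m by (simp add: frac_def field_simps)
qed

text \<open>Subtracting from each \<open>u\<close> a representative of its class, chosen from a finite set, moves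
  \<open>u\<close> by a bounded amount.\<close>

lemma relatively_dense_class_differences:
  fixes N :: "(int^'n) set" and \<beta> :: "int^'n \<Rightarrow> 'b"
  assumes N: "relatively_dense N" and fin: "finite (\<beta> ` N)"
  shows "\<exists>M. relatively_dense M \<and> (\<forall>v\<in>M. \<exists>u\<in>N. \<exists>a\<in>N. \<beta> u = \<beta> a \<and> v = u - a)"
proof -
  define rep where "rep u = (SOME a. a \<in> N \<and> \<beta> a = \<beta> u)" for u
  have rep: "rep u \<in> N \<and> \<beta> (rep u) = \<beta> u" if "u \<in> N" for u
    unfolding rep_def by (rule someI_ex) (use that in blast)
  have "rep ` N = (\<lambda>b. SOME a. a \<in> N \<and> \<beta> a = b) ` \<beta> ` N"
    unfolding rep_def by auto
  then have "finite (int_to_real ` rep ` N)"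
    using fin by simp
  then obtain b where b: "b > 0" "\<And>u. u \<in> N \<Longrightarrow> norm (int_to_real (rep u)) \<le> b"
    by (metis bounded_pos finite_imp_bounded image_eqI)
  have "\<bar>real_of_int ((u - rep u) $ i) - (mat 1 *v int_to_real u + 0) $ i\<bar> \<le> b" if "u \<in> N" for u i
    using component_le_norm_cart[of "int_to_real (rep u)" i] b(2)[OF that] by simp
  then have "relatively_dense ((\<lambda>u. u - rep u) ` N)"
    using b(1) by (intro relatively_dense_image_near_isometry[OF orthogonal_matrix_id N, of _ 0 b]) auto
  moreover have "\<exists>u'\<in>N. \<exists>a\<in>N. \<beta> u' = \<beta> a \<and> u - rep u = u' - a" if "u \<in> N" for u
    using rep[OF that] that by metis
  ultimately show ?thesis by blast
qed

text \<open>Sorting the almost periods \<open>u\<close> by the cell of \<open>[0, 1)\<^sup>n\<close> (of side \<open>1/m\<close>) containing the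
  fractional parts of \<open>P u\<close>, the difference of two almost periods in the same cell is mapped by \<open>P\<close>
  to within \<open>1/m\<close> of an integer vector, namely of its discretization.\<close>

lemma relatively_dense_almost_integral_differences:
  fixes P :: "real^'n^'n" and N :: "(int^'n) set"
  assumes P: "orthogonal_matrix P" and N: "relatively_dense N" and \<delta>: "\<delta> > 0"
  shows "\<exists>W. relatively_dense W \<and> (\<forall>w\<in>W. \<exists>u\<in>N. \<exists>a\<in>N.
           \<forall>i. \<bar>(P *v int_to_real (u - a)) $ i - real_of_int (w $ i)\<bar> < \<delta>)"
proof -
  obtain m :: nat where "m > 0" "inverse (real m) < min \<delta> (1/2)"
    using ex_inverse_of_nat_less[of "min \<delta> (1/2)"] \<delta> by auto
  then have m: "m > 0" "1 / real m \<le> \<delta>" "1 / real m \<le> 1/2"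
    by (simp_all add: inverse_eq_divide)
  define \<beta> where "\<beta> u = frac_cell m (P *v int_to_real u)" for u
  have "finite (\<beta> ` N)"
    unfolding \<beta>_def using finite_range_frac_cell by (rule finite_subset[rotated]) auto
  then obtain M where M: "relatively_dense M" and M_diff: "\<forall>v\<in>M. \<exists>u\<in>N. \<exists>a\<in>N. \<beta> u = \<beta> a \<and> v = u - a"
    using relatively_dense_class_differences[OF N] by blast
  have "relatively_dense (discretization P ` M)"
    using discretization_dist_le by (intro relatively_dense_image_near_isometry[OF P M, of _ 0 "1/2"]) auto
  moreover have "\<exists>u\<in>N. \<exists>a\<in>N. \<forall>i. \<bar>(P *v int_to_real (u - a)) $ i - real_of_int (discretization P v $ i)\<bar> < \<delta>"
    if "v \<in> M" for v
  proof -
    obtain u a where ua: "u \<in> N" "a \<in> N" "\<beta> u = \<beta> a" "v = u - a"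
      using M_diff \<open>v \<in> M\<close> by blast
    have "\<bar>(P *v int_to_real v) $ i - real_of_int (discretization P v $ i)\<bar> < \<delta>" for i
    proof -
      define k where "k = \<lfloor>(P *v int_to_real u) $ i\<rfloor> - \<lfloor>(P *v int_to_real a) $ i\<rfloor>"
      from frac_cell_eq_imp_close[OF m(1), of "P *v int_to_real u" "P *v int_to_real a" i] ua(3)
      have "\<bar>(P *v int_to_real v) $ i - real_of_int k\<bar> < 1 / real m"
        unfolding ua(4) k_def \<beta>_def by (simp add: int_to_real_diff matrix_vector_mult_diff_distrib)
      moreover from this have "discretization P v $ i = k"
        unfolding discretization_nth using m(3) by (intro round_half_unique) linarith
      ultimately show ?thesis
        using m(2) by linarith
    qed
    then show ?thesis
      using ua by blast
  qed
  ultimately show ?thesis by blast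
qed

lemma upper_density_sym_diff_discretization_diff_le:
  fixes P :: "real^'n^'n" and G :: "(int^'n) set"
  assumes P: "orthogonal_matrix P" and R: "R \<ge> 1"
    and adapted: "adapted_rows P Q \<delta>" and Q: "Q \<ge> 1"
    and close: "\<And>i. \<bar>(P *v int_to_real (u - a)) $ i - real_of_int (w $ i)\<bar> < \<delta>"
    and R': "real CARD('n) * (R + 1) \<ge> real CARD('n) * (real Q + 1) + 1"
  defines "K \<equiv> (5 * real CARD('n)) ^ CARD('n)" and "R' \<equiv> real CARD('n) * (R + 1)"
  shows "upper_density R (sym_diff (translate (discretization P ` G) w) (discretization P ` G))
    \<le> K * (upper_density R' (sym_diff (translate G u) G) + upper_density R' (sym_diff (translate G a) G))
      + 2 * K * (real CARD('n) * (3 / real Q))"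
proof -
  have K: "K \<ge> 0"
    unfolding K_def by simp
  have "upper_density R (sym_diff (translate (discretization P ` G) w) (discretization P ` G))
    \<le> K * upper_density R' (sym_diff (translate G (u - a)) G)
      + 2 * K * upper_density R' (rounding_mismatch P (u - a) w)"
    unfolding K_def R'_def by (rule upper_density_sym_diff_discretization_le[OF P R])
  also have "K * upper_density R' (sym_diff (translate G (u - a)) G)
    \<le> K * (upper_density R' (sym_diff (translate G u) G) + upper_density R' (sym_diff (translate G a) G))"
    using K by (intro mult_left_mono upper_density_sym_diff_translate_diff_le)
  also have "upper_density R' (rounding_mismatch P (u - a) w) \<le> real CARD('n) * (3 / real Q)"
    using adapted close Q R' unfolding R'_def by (rule upper_density_rounding_mismatch_le)
  finally show ?thesis
    using K by (simp add: mult_left_mono)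
qed

lemma almost_periods_discretization_image:
  fixes \<Gamma> :: "(int^'n) set" and P :: "real^'n^'n"
  assumes AP: "almost_periodic_pattern \<Gamma>" and P: "orthogonal_matrix P" and \<epsilon>: "\<epsilon> > 0"
  shows "\<exists>R\<epsilon>>0. \<exists>W. relatively_dense W \<and> (\<forall>R w. R \<ge> R\<epsilon> \<and> R \<ge> 1 \<and> w \<in> W \<longrightarrow>
           upper_density R (sym_diff (translate (discretization P ` \<Gamma>) w) (discretization P ` \<Gamma>)) < \<epsilon>)"
proof -
  define n where "n = real CARD('n)"
  define K where "K = (5 * n) ^ CARD('n)"
  have n: "n \<ge> 1" unfolding n_def by simp
  then have K: "K \<ge> 1" unfolding K_def by (intro one_le_power) simp
  then have "\<epsilon> / (4 * K) > 0" using \<epsilon> by simp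
  then obtain R0 N where R0: "R0 > 0" and N: "relatively_dense N"
    and NP: "\<And>R v. R \<ge> R0 \<Longrightarrow> R \<ge> 1 \<Longrightarrow> v \<in> N \<Longrightarrow> upper_density R (sym_diff (translate \<Gamma> v) \<Gamma>) < \<epsilon> / (4 * K)"
    using AP unfolding almost_periodic_pattern_def by meson
  obtain Q :: nat where Q: "Q \<ge> 1" "24 * K * n / \<epsilon> \<le> real Q"
    using real_arch_simple[of "24 * K * n / \<epsilon>"] by (metis max.cobounded1 max.cobounded2 of_nat_max order_trans)
  then have Q_small: "2 * K * (n * (3 / real Q)) \<le> \<epsilon> / 4"
    using \<epsilon> by (simp add: field_simps)
  obtain \<delta> where \<delta>: "\<delta> > 0" "adapted_rows P Q \<delta>"
    using ex_adapted_rows by blast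
  obtain W where W: "relatively_dense W" and W_close: "\<forall>w\<in>W. \<exists>u\<in>N. \<exists>a\<in>N.
      \<forall>i. \<bar>(P *v int_to_real (u - a)) $ i - real_of_int (w $ i)\<bar> < \<delta>"
    using relatively_dense_almost_integral_differences[OF P N \<delta>(1)] by blast
  define R\<epsilon> where "R\<epsilon> = max R0 (n * (real Q + 1) + 1)"
  have "upper_density R (sym_diff (translate (discretization P ` \<Gamma>) w) (discretization P ` \<Gamma>)) < \<epsilon>"
    if R: "R \<ge> R\<epsilon>" "R \<ge> 1" and w: "w \<in> W" for R w
  proof -
    obtain u a where ua: "u \<in> N" "a \<in> N"
      and close: "\<And>i. \<bar>(P *v int_to_real (u - a)) $ i - real_of_int (w $ i)\<bar> < \<delta>"
      using W_close w by blast
    have "R + 1 \<le> n * (R + 1)"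
      using n R(2) by simp
    moreover have "R \<ge> R0" "R \<ge> n * (real Q + 1) + 1"
      using R(1) unfolding R\<epsilon>_def by auto
    ultimately have R': "n * (R + 1) \<ge> R0" "n * (R + 1) \<ge> 1" "n * (R + 1) \<ge> n * (real Q + 1) + 1"
      using R(2) by linarith+
    have "upper_density R (sym_diff (translate (discretization P ` \<Gamma>) w) (discretization P ` \<Gamma>))
      \<le> K * (upper_density (n * (R + 1)) (sym_diff (translate \<Gamma> u) \<Gamma>)
             + upper_density (n * (R + 1)) (sym_diff (translate \<Gamma> a) \<Gamma>))
        + 2 * K * (n * (3 / real Q))"
      using upper_density_sym_diff_discretization_diff_le[OF P R(2) \<delta>(2) Q(1) close] R'(3)
      unfolding K_def n_def by blast
    also have "\<dots> < K * (\<epsilon> / (4 * K) + \<epsilon> / (4 * K)) + \<epsilon> / 4"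
      using NP[OF R'(1,2) ua(1)] NP[OF R'(1,2) ua(2)] K Q_small
      by (intro add_less_le_mono mult_strict_left_mono add_strict_mono) auto
    also have "\<dots> < \<epsilon>"
      using K \<epsilon> by (simp add: field_simps)
    finally show ?thesis .
  qed
  moreover have "R\<epsilon> > 0"
    unfolding R\<epsilon>_def using R0 by simp
  ultimately show ?thesis
    using W by blast
qed

lemma delone_discretization_image:
  fixes P :: "real^'n^'n"
  assumes "orthogonal_matrix P" and "relatively_dense \<Gamma>"
  shows "delone (discretization P ` \<Gamma>)"
proof -
  have "relatively_dense (discretization P ` \<Gamma>)"
    using discretization_dist_le by (intro relatively_dense_image_near_isometry[OF assms, of _ 0 "1/2"]) auto
  then show ?thesis
    unfolding delone_def using uniformly_discrete_int by blast
qed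

theorem theorem2p4:
  fixes \<Gamma> :: "(int^'n) set" and P :: "real^'n^'n"
  assumes "almost_periodic_pattern \<Gamma>"
    and "orthogonal_matrix P"
  shows "almost_periodic_pattern (discretization P ` \<Gamma>)"
proof -
  have "relatively_dense \<Gamma>"
    using assms(1) unfolding almost_periodic_pattern_def delone_def by simp
  then have "delone (discretization P ` \<Gamma>)"
    by (rule delone_discretization_image[OF assms(2)])
  then show ?thesis
    unfolding almost_periodic_pattern_def
    using almost_periods_discretization_image[OF assms] by blast
qed

end
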